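(* Let $\mathscr C$ be a small permutative category, let $X\in\Phi(\mathscr C)$, let $u\in\mathcal M$, and write $\mathrm{supp}(X)=\{i_1<\dots<i_m\}$. Then there exists a unique $\widetilde\sigma\in\Sigma_m$ with $u(i_{\widetilde\sigma^{-1}(1)})<\dots<u(i_{\widetilde\sigma^{-1}(m)})$, and, as a morphism $\bigotimes_{j=1}^mX_{i_j}\to\bigotimes_{j=1}^mX_{i_{\widetilde\sigma^{-1}(j)}}$ in $\mathscr C$, the structure isomorphism $[u,1]_X$ is the coherence isomorphism associated to $\widetilde\sigma$.
   Context: A permutative category is a symmetric monoidal category $(\mathscr C,\otimes,\mathbf 1,\tau)$ whose associativity and unit isomorphisms are identities; for $\sigma\in\Sigma_K$ the coherence isomorphism $\bigotimes_{i=1}^KA_i\to\bigotimes_{i=1}^KA_{\sigma^{-1}(i)}$ associated to $\sigma$ is the composite of maps $\mathrm{id}\otimes\tau\otimes\mathrm{id}$ along a decomposition of $\sigma$ into adjacent transpositions. Let $\omega=\{1,2,\dots\}$ and $\mathcal M$ the monoid of injections $\omega\to\omega$. $\Phi(\mathscr C)$ has objects the sequences $X=(X_1,X_2,\dots)$ of objects of $\mathscr C$ with $X_i=\mathbf 1$ for almost all $i$, morphisms $X\to Y$ the morphisms $\bigotimes_{i\in\omega}X_i\to\bigotimes_{i\in\omega}Y_i$ in $\mathscr C$ (ordered tensor product of the non-unit entries), $\mathrm{supp}(X)=\{i:X_i\ne\mathbf 1\}$, $(u_*X)_i=X_j$ if $i=u(j)$ and $\mathbf 1$ if $i\notin\mathrm{im}(u)$,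 and structure isomorphism $[u,1]_X\colon X\to u_*X$ defined as the coherence isomorphism $\bigotimes_{i=1}^KX_i\to\bigotimes_{i=1}^KX_{\sigma^{-1}(i)}=\bigotimes_{i=1}^K(u_*X)_i$ associated to a permutation $\sigma\in\Sigma_K$ with $\sigma(i)=u(i)$ for all $i\le K$ with $X_i\ne\mathbf 1$, where $K$ is chosen with $X_i=\mathbf 1=(u_*X)_i$ for all $i>K$ (independent of choices). *)

theory Defs
  imports "HOL-Combinatorics.Permutations"
begin

text \<open>A small category with a strict monoidal structure and a symmetry:
objects and morphisms are sets of elements of types 'o and 'm (hence small).
cmp g f is the composite g after f.\<close>

record ('o, 'm) pcat =
  obj  :: "'o set"
  mor  :: "'m set"
  dm   :: "'m \<Rightarrow> 'o"
  cd   :: "'m \<Rightarrow> 'o"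
  cmp  :: "'m \<Rightarrow> 'm \<Rightarrow> 'm"
  idm  :: "'o \<Rightarrow> 'm"
  tns  :: "'o \<Rightarrow> 'o \<Rightarrow> 'o"
  tnsm :: "'m \<Rightarrow> 'm \<Rightarrow> 'm"
  unt  :: "'o"
  brd  :: "'o \<Rightarrow> 'o \<Rightarrow> 'm"

definition permutative_category :: "('o, 'm) pcat \<Rightarrow> bool" where
  "permutative_category C \<longleftrightarrow>
     \<comment> \<open>category\<close>
     (\<forall>f\<in>mor C. dm C f \<in> obj C \<and> cd C f \<in> obj C) \<and>
     (\<forall>A\<in>obj C. idm C A \<in> mor C \<and> dm C (idm C A) = A \<and> cd C (idm C A) = A) \<and>
     (\<forall>f\<in>mor C. \<forall>g\<in>mor C. cd C f = dm C g \<longrightarrow>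
        cmp C g f \<in> mor C \<and> dm C (cmp C g f) = dm C f \<and> cd C (cmp C g f) = cd C g) \<and>
     (\<forall>f\<in>mor C. \<forall>g\<in>mor C. \<forall>h\<in>mor C. cd C f = dm C g \<longrightarrow> cd C g = dm C h \<longrightarrow>
        cmp C h (cmp C g f) = cmp C (cmp C h g) f) \<and>
     (\<forall>f\<in>mor C. cmp C f (idm C (dm C f)) = f \<and> cmp C (idm C (cd C f)) f = f) \<and>
     \<comment> \<open>tensor bifunctor\<close>
     unt C \<in> obj C \<and>
     (\<forall>A\<in>obj C. \<forall>B\<in>obj C. tns C A B \<in> obj C) \<and>
     (\<forall>f\<in>mor C. \<forall>g\<in>mor C. tnsm C f g \<in> mor C \<and>
        dm C (tnsm C f g) = tns C (dm C f) (dm C g) \<and> cd C (tnsm C f g) = tns C (cd C f) (cd C g)) \<and>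
     (\<forall>A\<in>obj C. \<forall>B\<in>obj C. tnsm C (idm C A) (idm C B) = idm C (tns C A B)) \<and>
     (\<forall>f\<in>mor C. \<forall>g\<in>mor C. \<forall>f'\<in>mor C. \<forall>g'\<in>mor C. cd C f = dm C g \<longrightarrow> cd C f' = dm C g' \<longrightarrow>
        tnsm C (cmp C g f) (cmp C g' f') = cmp C (tnsm C g g') (tnsm C f f')) \<and>
     \<comment> \<open>strict associativity and unit\<close>
     (\<forall>A\<in>obj C. \<forall>B\<in>obj C. \<forall>D\<in>obj C. tns C (tns C A B) D = tns C A (tns C B D)) \<and>
     (\<forall>f\<in>mor C. \<forall>g\<in>mor C. \<forall>h\<in>mor C. tnsm C (tnsm C f g) h = tnsm C f (tnsm C g h)) \<and>
     (\<forall>A\<in>obj C. tns C (unt C) A = A \<and> tns C A (unt C) = A) \<and>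
     (\<forall>f\<in>mor C. tnsm C (idm C (unt C)) f = f \<and> tnsm C f (idm C (unt C)) = f) \<and>
     \<comment> \<open>symmetry\<close>
     (\<forall>A\<in>obj C. \<forall>B\<in>obj C. brd C A B \<in> mor C \<and>
        dm C (brd C A B) = tns C A B \<and> cd C (brd C A B) = tns C B A) \<and>
     (\<forall>f\<in>mor C. \<forall>g\<in>mor C.
        cmp C (brd C (cd C f) (cd C g)) (tnsm C f g) = cmp C (tnsm C g f) (brd C (dm C f) (dm C g))) \<and>
     (\<forall>A\<in>obj C. \<forall>B\<in>obj C. cmp C (brd C B A) (brd C A B) = idm C (tns C A B)) \<and>
     (\<forall>A\<in>obj C. \<forall>B\<in>obj C. \<forall>D\<in>obj C.
        brd C A (tns C B D) = cmp C (tnsm C (idm C B) (brd C A D)) (tnsm C (brd C A B) (idm C D))) \<and>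
     (\<forall>A\<in>obj C. brd C A (unt C) = idm C A)"

definition tprod :: "('o, 'm) pcat \<Rightarrow> (nat \<Rightarrow> 'o) \<Rightarrow> nat \<Rightarrow> nat \<Rightarrow> 'o" where
  "tprod C A a b = foldr (tns C) (map A [a..<Suc b]) (unt C)"

definition adj :: "nat \<Rightarrow> nat \<Rightarrow> nat" where
  "adj j = (\<lambda>i. if i = j then Suc j else if i = Suc j then j else i)"

definition swapmap :: "('o, 'm) pcat \<Rightarrow> (nat \<Rightarrow> 'o) \<Rightarrow> nat \<Rightarrow> nat \<Rightarrow> 'm" where
  "swapmap C A K j =
     tnsm C (tnsm C (idm C (tprod C A 1 (j - 1))) (brd C (A j) (A (Suc j))))
            (idm C (tprod C A (j + 2) K))"

text \<open>coh_rel C A K \<sigma> f: f is the composite of maps id \<otimes> \<tau> \<otimes> id along some decomposition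
of \<sigma> into adjacent transpositions; f goes from A_1\<otimes>...\<otimes>A_K to A_{\<sigma>^{-1}(1)}\<otimes>...\<otimes>A_{\<sigma>^{-1}(K)}.\<close>
inductive coh_rel :: "('o, 'm) pcat \<Rightarrow> (nat \<Rightarrow> 'o) \<Rightarrow> nat \<Rightarrow> (nat \<Rightarrow> nat) \<Rightarrow> 'm \<Rightarrow> bool"
  for C A K where
  base: "coh_rel C A K id (idm C (tprod C A 1 K))"
| step: "coh_rel C A K \<sigma> f \<Longrightarrow> 1 \<le> j \<Longrightarrow> j < K \<Longrightarrow>
         coh_rel C A K (adj j \<circ> \<sigma>) (cmp C (swapmap C (A \<circ> inv \<sigma>) K j) f)"

definition coh_iso :: "('o, 'm) pcat \<Rightarrow> (nat \<Rightarrow> 'o) \<Rightarrow> nat \<Rightarrow> (nat \<Rightarrow> nat) \<Rightarrow> 'm" where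
  "coh_iso C A K \<sigma> = (SOME f. coh_rel C A K \<sigma> f)"

text \<open>Objects of \<Phi>(C): sequences indexed by \<omega> = {1,2,...} (value at 0 ignored).\<close>
definition supp :: "('o, 'm) pcat \<Rightarrow> (nat \<Rightarrow> 'o) \<Rightarrow> nat set" where
  "supp C X = {i. 1 \<le> i \<and> X i \<noteq> unt C}"

definition Phi_obj :: "('o, 'm) pcat \<Rightarrow> (nat \<Rightarrow> 'o) \<Rightarrow> bool" where
  "Phi_obj C X \<longleftrightarrow> (\<forall>i\<ge>1. X i \<in> obj C) \<and> finite (supp C X)"

definition inj_omega :: "(nat \<Rightarrow> nat) \<Rightarrow> bool" where
  "inj_omega u \<longleftrightarrow> inj_on u {1..} \<and> u ` {1..} \<subseteq> {1..}"

definition push :: "('o, 'm) pcat \<Rightarrow> (nat \<Rightarrow> nat) \<Rightarrow> (nat \<Rightarrow> 'o) \<Rightarrow> nat \<Rightarrow> 'o" where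
  "push C u X i = (if i \<in> u ` {1..} then X (the_inv_into {1..} u i) else unt C)"

definition struct_iso :: "('o, 'm) pcat \<Rightarrow> (nat \<Rightarrow> nat) \<Rightarrow> (nat \<Rightarrow> 'o) \<Rightarrow> 'm" where
  "struct_iso C u X = (SOME f. \<exists>K \<sigma>.
      (\<forall>i>K. X i = unt C \<and> push C u X i = unt C) \<and>
      \<sigma> permutes {1..K} \<and>
      (\<forall>i\<in>{1..K}. X i \<noteq> unt C \<longrightarrow> \<sigma> i = u i) \<and>
      f = coh_iso C X K \<sigma>)"

end

(*
  The composite of maps id \<otimes> \<tau> \<otimes> id along any decomposition of a permutation into
  adjacent transpositions equals one canonical morphism reorder xs ys, which brings the factors
  of the tensor product over the list xs into the order ys by braiding the first occurrence of the
  head of ys to the front and recursing.  This is because reorder is compatible with an adjacent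
  swap in the target list: away from the head it is functoriality of the tensor product, at the
  head it is the hexagon identity combined with naturality of the braiding.

  Hence coh_iso C A K \<sigma> = reorder [1..K] [\<sigma>^-1(1), ..., \<sigma>^-1(K)].  Unit factors can be
  dropped from both lists and indices can be renamed injectively, so for every choice of K and
  \<sigma> made in the definition of [u,1]_X one gets the morphism reorder that sends supp X, listed
  increasingly, to supp X listed in increasing order of u.  With I the increasing enumeration
  of supp X, the coherence isomorphism of X \<circ> I for the permutation sorting u \<circ> I is that
  same morphism.
*)
theory Submission
  imports Defs "HOL-Library.Multiset"
begin

section \<open>Sorting permutations\<close>

lemma sorted_wrt_key_unique:
  fixes k :: "'a \<Rightarrow> 'b::linorder"
  assumes "inj_on k (set xs)" "set xs = set ys"
    and "sorted_wrt (\<lambda>a b. k a < k b) xs" "sorted_wrt (\<lambda>a b. k a < k b) ys"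
  shows "xs = ys"
proof -
  have "map k xs = map k ys"
    using assms(2-4) by (intro strict_sorted_equal) (simp_all add: sorted_wrt_map)
  then show ?thesis
    using assms(1,2) by (simp add: inj_on_map_eq_map)
qed

lemma sorted_wrt_map_upt_iff:
  "sorted_wrt R (map f [1..<Suc m]) \<longleftrightarrow> (\<forall>a b. 1 \<le> a \<longrightarrow> a < b \<longrightarrow> b \<le> m \<longrightarrow> R (f a) (f b))"
proof -
  have "sorted_wrt R (map f [1..<Suc m]) \<longleftrightarrow> (\<forall>i j. i < j \<longrightarrow> j < m \<longrightarrow> R (f (Suc i)) (f (Suc j)))"
    by (simp add: sorted_wrt_iff_nth_less del: upt_Suc)
  also have "\<dots> \<longleftrightarrow> (\<forall>a b. 1 \<le> a \<longrightarrow> a < b \<longrightarrow> b \<le> m \<longrightarrow> R (f a) (f b))"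
  proof (intro iffI allI impI)
    fix a b assume H: "\<forall>i j. i < j \<longrightarrow> j < m \<longrightarrow> R (f (Suc i)) (f (Suc j))" and "1 \<le> a" "a < b" "b \<le> m"
    then have "R (f (Suc (a - 1))) (f (Suc (b - 1)))"
      by (intro H[rule_format]) auto
    then show "R (f a) (f b)"
      using \<open>1 \<le> a\<close> \<open>a < b\<close> by simp
  next
    fix i j assume "\<forall>a b. 1 \<le> a \<longrightarrow> a < b \<longrightarrow> b \<le> m \<longrightarrow> R (f a) (f b)" "i < j" "j < m"
    then show "R (f (Suc i)) (f (Suc j))"
      by simp
  qed
  finally show ?thesis .
qed

lemma permutes_of_list:
  assumes "distinct ys" "set ys = {1..m}"
  obtains \<pi> where "\<pi> permutes {1..m}" "map \<pi> [1..<Suc m] = ys"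
proof
  define \<pi> where "\<pi> a = (if a \<in> {1..m} then ys ! (a - 1) else a)" for a
  have len: "length ys = m"
    using distinct_card[OF assms(1)] assms(2) by simp
  have "inj_on \<pi> {1..m}"
    using assms(1) len by (auto simp: inj_on_def \<pi>_def nth_eq_iff_index_eq)
  moreover have "\<pi> a \<in> {1..m}" if "a \<in> {1..m}" for a
  proof -
    have "ys ! (a - 1) \<in> set ys"
      using that len by (intro nth_mem) auto
    then show ?thesis
      using that assms(2) by (simp add: \<pi>_def)
  qed
  ultimately have "\<pi> ` {1..m} = {1..m}"
    by (intro endo_inj_surj) auto
  with \<open>inj_on \<pi> {1..m}\<close> show "\<pi> permutes {1..m}"
    by (intro bij_imp_permutes) (auto simp: bij_betw_def \<pi>_def)
  show "map \<pi> [1..<Suc m] = ys"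
    using len by (intro nth_equalityI) (auto simp: \<pi>_def simp del: upt_Suc)
qed

lemma ex1_sorting_permutation:
  fixes k :: "nat \<Rightarrow> 'a::linorder"
  assumes "inj_on k {1..m}"
  shows "\<exists>!\<sigma>. \<sigma> permutes {1..m} \<and> sorted_wrt (\<lambda>a b. k a < k b) (map (inv \<sigma>) [1..<Suc m])"
    (is "\<exists>!\<sigma>. ?sorting \<sigma>")
proof (rule ex_ex1I)
  define ys where "ys = sort_key k [1..<Suc m]"
  have ys: "distinct ys" "set ys = {1..m}"
    by (simp_all add: ys_def atLeastLessThanSuc_atLeastAtMost del: upt_Suc)
  then have "sorted_wrt (<) (map k ys)"
    using assms by (simp add: strict_sorted_iff distinct_map ys_def del: upt_Suc)
  then have sorted: "sorted_wrt (\<lambda>a b. k a < k b) ys"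
    by (simp add: sorted_wrt_map)
  obtain \<pi> where "\<pi> permutes {1..m}" "map \<pi> [1..<Suc m] = ys"
    using permutes_of_list[OF ys] .
  then show "\<exists>\<sigma>. ?sorting \<sigma>"
    using sorted by (metis permutes_inv permutes_inv_inv)
next
  fix \<sigma> \<sigma>' assume \<sigma>: "?sorting \<sigma>" and \<sigma>': "?sorting \<sigma>'"
  have set_inv: "set (map (inv \<rho>) [1..<Suc m]) = {1..m}" if "\<rho> permutes {1..m}" for \<rho>
    using permutes_image[OF permutes_inv[OF that]] by (simp add: atLeastLessThanSuc_atLeastAtMost del: upt_Suc)
  then have map_eq: "map (inv \<sigma>) [1..<Suc m] = map (inv \<sigma>') [1..<Suc m]"
    using \<sigma> \<sigma>' assms by (intro sorted_wrt_key_unique) auto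
  have "inv \<sigma> x = inv \<sigma>' x" for x
  proof (cases "x \<in> {1..m}")
    case True
    then show ?thesis
      using map_eq by (simp add: atLeastLessThanSuc_atLeastAtMost del: upt_Suc)
  next
    case False
    then show ?thesis
      using permutes_not_in[OF permutes_inv] \<sigma> \<sigma>' by metis
  qed
  then have "inv \<sigma> = inv \<sigma>'" ..
  then show "\<sigma> = \<sigma>'"
    using \<sigma> \<sigma>' by (metis permutes_inv_inv)
qed

lemma permutes_extension:
  assumes "finite T" "S \<subseteq> T" "inj_on u S" "u ` S \<subseteq> T"
  obtains \<sigma> where "\<sigma> permutes T" "\<forall>i\<in>S. \<sigma> i = u i"
proof -
  have "card (T - S) = card (T - u ` S)"
    using assms by (simp add: card_Diff_subset card_image finite_subset)
  then obtain h where h: "bij_betw h (T - S) (T - u ` S)"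
    using finite_same_card_bij assms(1) by blast
  define \<sigma> where "\<sigma> i = (if i \<in> S then u i else if i \<in> T then h i else i)" for i
  have "bij_betw u S (u ` S)"
    using assms(3) by (rule inj_on_imp_bij_betw)
  then have "bij_betw \<sigma> S (u ` S)"
    by (rule bij_betw_cong[THEN iffD2, rotated]) (simp add: \<sigma>_def)
  moreover have "bij_betw \<sigma> (T - S) (T - u ` S)"
    using h by (rule bij_betw_cong[THEN iffD2, rotated]) (simp add: \<sigma>_def)
  ultimately have "bij_betw \<sigma> (S \<union> (T - S)) (u ` S \<union> (T - u ` S))"
    by (rule bij_betw_combine) blast
  then have "\<sigma> permutes T"
    using assms(2,4) by (intro bij_imp_permutes) (auto simp: \<sigma>_def Un_absorb1 Un_Diff_cancel)
  moreover have "\<forall>i\<in>S. \<sigma> i = u i"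
    by (simp add: \<sigma>_def)
  ultimately show ?thesis
    using that by blast
qed

lemma mset_map_permutes_upt:
  assumes "\<sigma> permutes {1..K}"
  shows "mset (map \<sigma> [1..<Suc K]) = mset [1..<Suc K]"
  using permutes_image[OF assms] permutes_inj[OF assms]
  by (subst set_eq_iff_mset_eq_distinct[symmetric])
    (auto simp: distinct_map inj_on_def inj_def atLeastLessThanSuc_atLeastAtMost simp del: upt_Suc)

lemma map_upt_sorted_list_of_setD:
  assumes "map I [1..<Suc m] = sorted_list_of_set S" "finite S"
  shows "inj_on I {1..m}" "I ` {1..m} = S"
proof -
  have "distinct (map I [1..<Suc m])" "set (map I [1..<Suc m]) = S"
    unfolding assms(1) using assms(2) by simp_all
  then show "inj_on I {1..m}" "I ` {1..m} = S"
    by (simp_all add: distinct_map atLeastLessThanSuc_atLeastAtMost del: upt_Suc)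
qed

section \<open>Adjacent transpositions\<close>

lemma adj_eq_transpose: "adj j = Transposition.transpose j (Suc j)"
  by (auto simp: adj_def transpose_def fun_eq_iff)

lemma adj_permutes: "1 \<le> j \<Longrightarrow> j < K \<Longrightarrow> adj j permutes {1..K}"
  unfolding adj_eq_transpose by (rule permutes_swap_id) auto

lemma inv_adj_comp:
  assumes "\<sigma> permutes S"
  shows "inv (adj j \<circ> \<sigma>) = inv \<sigma> \<circ> adj j"
  using assms by (simp add: adj_eq_transpose o_inv_distrib permutes_bij bij_swap_iff)

lemma map_upt_adj:
  assumes "1 \<le> j" "j < K"
  shows "map g [1..<Suc K] = map g [1..<j] @ g j # g (Suc j) # map g [Suc (Suc j)..<Suc K]"
    and "map (g \<circ> adj j) [1..<Suc K] = map g [1..<j] @ g (Suc j) # g j # map g [Suc (Suc j)..<Suc K]"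
proof -
  have "[1..<Suc K] = [1..<j] @ [j..<Suc K]"
    using upt_add_eq_append[of 1 j "Suc K - j"] assms by simp
  then have ns: "[1..<Suc K] = [1..<j] @ j # Suc j # [Suc (Suc j)..<Suc K]"
    using assms(2) by (simp add: upt_conv_Cons del: upt_Suc)
  show "map g [1..<Suc K] = map g [1..<j] @ g j # g (Suc j) # map g [Suc (Suc j)..<Suc K]"
    by (subst ns) (simp del: upt_Suc)
  have fixed: "map (g \<circ> adj j) xs = map g xs" if "\<forall>i\<in>set xs. i \<noteq> j \<and> i \<noteq> Suc j" for xs
    using that by (induction xs) (auto simp: adj_def)
  show "map (g \<circ> adj j) [1..<Suc K] = map g [1..<j] @ g (Suc j) # g j # map g [Suc (Suc j)..<Suc K]"
    by (subst ns) (simp add: fixed adj_def del: upt_Suc)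
qed

lemma coh_rel_transpose:
  assumes "coh_rel C A K \<sigma> f" "1 \<le> a" "a < b" "b \<le> K"
  shows "\<exists>g. coh_rel C A K (Transposition.transpose a b \<circ> \<sigma>) g"
  using assms
proof (induction b arbitrary: \<sigma> f)
  case 0
  then show ?case by simp
next
  case (Suc b)
  have "1 \<le> b" "b < K"
    using Suc.prems by auto
  show ?case
  proof (cases "a = b")
    case True
    then show ?thesis
      using coh_rel.step[OF Suc.prems(1) \<open>1 \<le> b\<close> \<open>b < K\<close>] unfolding adj_eq_transpose by blast
  next
    case False
    obtain g where "coh_rel C A K (Transposition.transpose a b \<circ> (adj b \<circ> \<sigma>)) g"
      using Suc.IH[OF coh_rel.step[OF Suc.prems(1) \<open>1 \<le> b\<close> \<open>b < K\<close>]] Suc.prems False by fastforce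
    from coh_rel.step[OF this \<open>1 \<le> b\<close> \<open>b < K\<close>]
    have "\<exists>g. coh_rel C A K (adj b \<circ> (Transposition.transpose a b \<circ> (adj b \<circ> \<sigma>))) g" ..
    moreover have "adj b \<circ> (Transposition.transpose a b \<circ> (adj b \<circ> \<sigma>)) = Transposition.transpose a (Suc b) \<circ> \<sigma>"
      using False Suc.prems by (auto simp: adj_def transpose_def fun_eq_iff)
    ultimately show ?thesis by metis
  qed
qed

lemma coh_rel_exists:
  assumes "\<sigma> permutes {1..K}"
  shows "\<exists>f. coh_rel C A K \<sigma> f"
  using assms finite_atLeastAtMost
proof (induction \<sigma> rule: permutes_induct)
  case id
  then show ?case using coh_rel.base by blast
next
  case (swap a b p)
  then obtain f where "coh_rel C A K p f" by blast
  moreover have "a < b \<or> b < a"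
    using swap.hyps by arith
  ultimately show ?case
    using coh_rel_transpose[of C A K p f a b] coh_rel_transpose[of C A K p f b a] swap.hyps
    by (metis atLeastAtMost_iff transpose_commute)
qed

section \<open>Permutative categories\<close>

locale permutative_cat =
  fixes C :: "('o, 'm) pcat"
  assumes dm_mor [simp]: "f \<in> mor C \<Longrightarrow> dm C f \<in> obj C"
    and cd_mor [simp]: "f \<in> mor C \<Longrightarrow> cd C f \<in> obj C"
    and idm_mor [simp]: "A \<in> obj C \<Longrightarrow> idm C A \<in> mor C"
    and dm_idm [simp]: "A \<in> obj C \<Longrightarrow> dm C (idm C A) = A"
    and cd_idm [simp]: "A \<in> obj C \<Longrightarrow> cd C (idm C A) = A"
    and cmp_mor [simp]: "f \<in> mor C \<Longrightarrow> g \<in> mor C \<Longrightarrow> cd C f = dm C g \<Longrightarrow> cmp C g f \<in> mor C"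
    and dm_cmp [simp]: "f \<in> mor C \<Longrightarrow> g \<in> mor C \<Longrightarrow> cd C f = dm C g \<Longrightarrow> dm C (cmp C g f) = dm C f"
    and cd_cmp [simp]: "f \<in> mor C \<Longrightarrow> g \<in> mor C \<Longrightarrow> cd C f = dm C g \<Longrightarrow> cd C (cmp C g f) = cd C g"
    and cmp_assoc: "f \<in> mor C \<Longrightarrow> g \<in> mor C \<Longrightarrow> h \<in> mor C \<Longrightarrow> cd C f = dm C g \<Longrightarrow> cd C g = dm C h \<Longrightarrow>
      cmp C h (cmp C g f) = cmp C (cmp C h g) f"
    and cmp_idm_dm: "f \<in> mor C \<Longrightarrow> cmp C f (idm C (dm C f)) = f"
    and cmp_idm_cd: "f \<in> mor C \<Longrightarrow> cmp C (idm C (cd C f)) f = f"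
    and unt_obj [simp]: "unt C \<in> obj C"
    and tns_obj [simp]: "A \<in> obj C \<Longrightarrow> B \<in> obj C \<Longrightarrow> tns C A B \<in> obj C"
    and tnsm_mor [simp]: "f \<in> mor C \<Longrightarrow> g \<in> mor C \<Longrightarrow> tnsm C f g \<in> mor C"
    and dm_tnsm [simp]: "f \<in> mor C \<Longrightarrow> g \<in> mor C \<Longrightarrow> dm C (tnsm C f g) = tns C (dm C f) (dm C g)"
    and cd_tnsm [simp]: "f \<in> mor C \<Longrightarrow> g \<in> mor C \<Longrightarrow> cd C (tnsm C f g) = tns C (cd C f) (cd C g)"
    and tnsm_idm [simp]: "A \<in> obj C \<Longrightarrow> B \<in> obj C \<Longrightarrow> tnsm C (idm C A) (idm C B) = idm C (tns C A B)"
    and tnsm_cmp: "f \<in> mor C \<Longrightarrow> g \<in> mor C \<Longrightarrow> f' \<in> mor C \<Longrightarrow> g' \<in> mor C \<Longrightarrow>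
      cd C f = dm C g \<Longrightarrow> cd C f' = dm C g' \<Longrightarrow>
      tnsm C (cmp C g f) (cmp C g' f') = cmp C (tnsm C g g') (tnsm C f f')"
    and tns_assoc [simp]: "A \<in> obj C \<Longrightarrow> B \<in> obj C \<Longrightarrow> D \<in> obj C \<Longrightarrow> tns C (tns C A B) D = tns C A (tns C B D)"
    and tnsm_assoc [simp]: "f \<in> mor C \<Longrightarrow> g \<in> mor C \<Longrightarrow> h \<in> mor C \<Longrightarrow>
      tnsm C (tnsm C f g) h = tnsm C f (tnsm C g h)"
    and tns_unt_left [simp]: "A \<in> obj C \<Longrightarrow> tns C (unt C) A = A"
    and tns_unt_right [simp]: "A \<in> obj C \<Longrightarrow> tns C A (unt C) = A"
    and tnsm_unt_left [simp]: "f \<in> mor C \<Longrightarrow> tnsm C (idm C (unt C)) f = f"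
    and tnsm_unt_right [simp]: "f \<in> mor C \<Longrightarrow> tnsm C f (idm C (unt C)) = f"
    and brd_mor [simp]: "A \<in> obj C \<Longrightarrow> B \<in> obj C \<Longrightarrow> brd C A B \<in> mor C"
    and dm_brd [simp]: "A \<in> obj C \<Longrightarrow> B \<in> obj C \<Longrightarrow> dm C (brd C A B) = tns C A B"
    and cd_brd [simp]: "A \<in> obj C \<Longrightarrow> B \<in> obj C \<Longrightarrow> cd C (brd C A B) = tns C B A"
    and brd_natural: "f \<in> mor C \<Longrightarrow> g \<in> mor C \<Longrightarrow>
      cmp C (brd C (cd C f) (cd C g)) (tnsm C f g) = cmp C (tnsm C g f) (brd C (dm C f) (dm C g))"
    and brd_brd: "A \<in> obj C \<Longrightarrow> B \<in> obj C \<Longrightarrow> cmp C (brd C B A) (brd C A B) = idm C (tns C A B)"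
    and brd_tns_right: "A \<in> obj C \<Longrightarrow> B \<in> obj C \<Longrightarrow> D \<in> obj C \<Longrightarrow>
      brd C A (tns C B D) = cmp C (tnsm C (idm C B) (brd C A D)) (tnsm C (brd C A B) (idm C D))"
    and brd_unt_right [simp]: "A \<in> obj C \<Longrightarrow> brd C A (unt C) = idm C A"

lemma permutative_category_imp_permutative_cat:
  assumes "permutative_category C"
  shows "permutative_cat C"
  by unfold_locales (use assms in \<open>simp_all add: permutative_category_def\<close>)

context permutative_cat
begin

abbreviation comp (infixr "\<cdot>" 55) where "g \<cdot> f \<equiv> cmp C g f"
abbreviation tensor_mor (infixr "\<otimes>" 60) where "f \<otimes> g \<equiv> tnsm C f g"
abbreviation tensor_obj (infixr "\<boxtimes>" 60) where "A \<boxtimes> B \<equiv> tns C A B"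

lemma cmp_idm_left [simp]: "f \<in> mor C \<Longrightarrow> cd C f = A \<Longrightarrow> idm C A \<cdot> f = f"
  using cmp_idm_cd by blast

lemma cmp_idm_right [simp]: "f \<in> mor C \<Longrightarrow> dm C f = A \<Longrightarrow> f \<cdot> idm C A = f"
  using cmp_idm_dm by blast

lemma brd_unt_left [simp]: "A \<in> obj C \<Longrightarrow> brd C (unt C) A = idm C A"
  using brd_brd[of A "unt C"] by simp

lemma tnsm_idm_idm_assoc [simp]:
  "A \<in> obj C \<Longrightarrow> B \<in> obj C \<Longrightarrow> f \<in> mor C \<Longrightarrow> idm C A \<otimes> idm C B \<otimes> f = idm C (A \<boxtimes> B) \<otimes> f"
  by (simp flip: tnsm_assoc)

lemma tnsm_cmp_idm_left:
  "f \<in> mor C \<Longrightarrow> g \<in> mor C \<Longrightarrow> cd C f = dm C g \<Longrightarrow> A \<in> obj C \<Longrightarrow>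
    (idm C A \<otimes> g) \<cdot> (idm C A \<otimes> f) = idm C A \<otimes> (g \<cdot> f)"
  using tnsm_cmp[of "idm C A" "idm C A" f g] by simp

lemma tnsm_cmp_idm_right:
  "f \<in> mor C \<Longrightarrow> g \<in> mor C \<Longrightarrow> cd C f = dm C g \<Longrightarrow> A \<in> obj C \<Longrightarrow>
    (g \<otimes> idm C A) \<cdot> (f \<otimes> idm C A) = (g \<cdot> f) \<otimes> idm C A"
  using tnsm_cmp[of f g "idm C A" "idm C A"] by simp

lemma cmp_tnsm_idm_commute:
  "f \<in> mor C \<Longrightarrow> g \<in> mor C \<Longrightarrow>
    (idm C (cd C f) \<otimes> g) \<cdot> (f \<otimes> idm C (dm C g)) = (f \<otimes> idm C (cd C g)) \<cdot> (idm C (dm C f) \<otimes> g)"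
  using tnsm_cmp[of f "idm C (cd C f)" "idm C (dm C g)" g] tnsm_cmp[of "idm C (dm C f)" f g "idm C (cd C g)"]
  by simp

lemma brd_tns_left:
  assumes "A \<in> obj C" "B \<in> obj C" "D \<in> obj C"
  shows "brd C (B \<boxtimes> D) A = (brd C B A \<otimes> idm C D) \<cdot> (idm C B \<otimes> brd C D A)"
proof -
  define g where "g = (brd C B A \<otimes> idm C D) \<cdot> (idm C B \<otimes> brd C D A)"
  have g: "g \<in> mor C" "dm C g = B \<boxtimes> D \<boxtimes> A" "cd C g = A \<boxtimes> B \<boxtimes> D"
    using assms by (simp_all add: g_def)
  have "g \<cdot> brd C A (B \<boxtimes> D) =
      (brd C B A \<otimes> idm C D) \<cdot> ((idm C B \<otimes> brd C D A) \<cdot> (idm C B \<otimes> brd C A D)) \<cdot> (brd C A B \<otimes> idm C D)"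
    using assms by (simp add: g_def brd_tns_right cmp_assoc)
  also have "\<dots> = (brd C B A \<otimes> idm C D) \<cdot> (brd C A B \<otimes> idm C D)"
    using assms by (simp add: tnsm_cmp_idm_left brd_brd)
  also have "\<dots> = idm C (A \<boxtimes> B \<boxtimes> D)"
    using assms by (simp add: tnsm_cmp_idm_right brd_brd)
  finally have inverse: "g \<cdot> brd C A (B \<boxtimes> D) = idm C (A \<boxtimes> B \<boxtimes> D)" .
  have "brd C (B \<boxtimes> D) A = (g \<cdot> brd C A (B \<boxtimes> D)) \<cdot> brd C (B \<boxtimes> D) A"
    using assms by (simp add: inverse)
  also have "\<dots> = g \<cdot> idm C (B \<boxtimes> D \<boxtimes> A)"
    using assms g by (simp add: cmp_assoc[symmetric] brd_brd)
  finally show ?thesis using g by (simp add: g_def)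
qed

lemma brd_move_past:
  assumes "P \<in> obj C" "Q \<in> obj C" "A \<in> obj C" "B \<in> obj C"
  shows "(brd C A B \<otimes> idm C (P \<boxtimes> Q)) \<cdot> (idm C A \<otimes> brd C (P \<boxtimes> Q) B) \<cdot> (brd C P A \<otimes> idm C (Q \<boxtimes> B))
       = (idm C B \<otimes> brd C P A \<otimes> idm C Q) \<cdot> brd C (P \<boxtimes> A \<boxtimes> Q) B"
proof -
  have "(brd C A B \<otimes> idm C (P \<boxtimes> Q)) \<cdot> (idm C A \<otimes> brd C (P \<boxtimes> Q) B) = brd C (A \<boxtimes> P \<boxtimes> Q) B"
    using assms by (simp add: brd_tns_left)
  moreover have "brd C (A \<boxtimes> P \<boxtimes> Q) B \<cdot> ((brd C P A \<otimes> idm C Q) \<otimes> idm C B)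
      = (idm C B \<otimes> brd C P A \<otimes> idm C Q) \<cdot> brd C (P \<boxtimes> A \<boxtimes> Q) B"
    using brd_natural[of "brd C P A \<otimes> idm C Q" "idm C B"] assms by simp
  ultimately show ?thesis
    using assms by (simp add: cmp_assoc)
qed

end

section \<open>Reordering isomorphisms\<close>

definition tprod_list :: "('o, 'm) pcat \<Rightarrow> (nat \<Rightarrow> 'o) \<Rightarrow> nat list \<Rightarrow> 'o" where
  "tprod_list C A xs = foldr (tns C) (map A xs) (unt C)"

lemma tprod_list_Nil [simp]: "tprod_list C A [] = unt C"
  by (simp add: tprod_list_def)

lemma tprod_list_Cons [simp]: "tprod_list C A (x # xs) = tns C (A x) (tprod_list C A xs)"
  by (simp add: tprod_list_def)

lemma tprod_list_map: "tprod_list C A (map g xs) = tprod_list C (A \<circ> g) xs"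
  by (simp add: tprod_list_def)

lemma tprod_eq_tprod_list: "tprod C A a b = tprod_list C A [a..<Suc b]"
  by (simp add: tprod_def tprod_list_def)

text \<open>For a rearrangement ys of xs, the isomorphism from the tensor product of A over xs to that
over ys.\<close>
primrec reorder :: "('o, 'm) pcat \<Rightarrow> (nat \<Rightarrow> 'o) \<Rightarrow> nat list \<Rightarrow> nat list \<Rightarrow> 'm" where
  "reorder C A xs [] = idm C (unt C)"
| "reorder C A xs (y # ys) =
     cmp C (tnsm C (idm C (A y)) (reorder C A (remove1 y xs) ys))
       (tnsm C (brd C (tprod_list C A (takeWhile (\<lambda>x. x \<noteq> y) xs)) (A y))
          (idm C (tprod_list C A (tl (dropWhile (\<lambda>x. x \<noteq> y) xs)))))"

lemma reorder_Cons_split: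
  assumes "y \<notin> set pre"
  shows "reorder C A (pre @ y # post) (y # ys) =
    cmp C (tnsm C (idm C (A y)) (reorder C A (pre @ post) ys))
      (tnsm C (brd C (tprod_list C A pre) (A y)) (idm C (tprod_list C A post)))"
proof -
  have "takeWhile (\<lambda>x. x \<noteq> y) (pre @ y # post) = pre" "dropWhile (\<lambda>x. x \<noteq> y) (pre @ y # post) = y # post"
    using assms by (simp_all add: takeWhile_append dropWhile_append)
  then show ?thesis
    using assms by (simp add: remove1_append)
qed

declare reorder.simps(2) [simp del]

lemma reorder_map:
  assumes "mset xs = mset ys" "inj_on g (set xs)"
  shows "reorder C A (map g xs) (map g ys) = reorder C (A \<circ> g) xs ys"
  using assms
proof (induction ys arbitrary: xs)
  case Nil
  then show ?case by simp
next
  case (Cons y ys)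
  have "y \<in> set xs"
    using Cons.prems(1) by (metis list.set_intros(1) mset_eq_setD)
  then obtain pre post where xs: "xs = pre @ y # post" "y \<notin> set pre"
    using split_list_first by metis
  have "g y \<notin> set (map g pre)"
    using Cons.prems(2) xs by (auto simp: inj_on_def)
  moreover have "reorder C A (map g (pre @ post)) (map g ys) = reorder C (A \<circ> g) (pre @ post) ys"
    using Cons.prems xs by (intro Cons.IH) (auto simp: inj_on_def)
  ultimately show ?case
    using xs by (simp add: reorder_Cons_split tprod_list_map comp_def)
qed

context permutative_cat
begin

lemma tprod_list_obj [simp]: "\<forall>x\<in>set xs. A x \<in> obj C \<Longrightarrow> tprod_list C A xs \<in> obj C"
  by (induction xs) auto

lemma tprod_list_append [simp]:
  "\<forall>x\<in>set xs. A x \<in> obj C \<Longrightarrow> \<forall>x\<in>set ys. A x \<in> obj C \<Longrightarrow>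
    tprod_list C A (xs @ ys) = tprod_list C A xs \<boxtimes> tprod_list C A ys"
  by (induction xs) auto

lemma reorder_typing:
  assumes "mset xs = mset ys" "\<forall>x\<in>set xs. A x \<in> obj C"
  shows "reorder C A xs ys \<in> mor C \<and> dm C (reorder C A xs ys) = tprod_list C A xs \<and>
    cd C (reorder C A xs ys) = tprod_list C A ys"
  using assms
proof (induction ys arbitrary: xs)
  case Nil
  then show ?case by simp
next
  case (Cons y ys)
  have "y \<in> set xs"
    using Cons.prems(1) by (metis list.set_intros(1) mset_eq_setD)
  then obtain pre post where xs: "xs = pre @ y # post" "y \<notin> set pre"
    using split_list_first by metis
  have "mset (pre @ post) = mset ys" "\<forall>x\<in>set (pre @ post). A x \<in> obj C"
    using Cons.prems unfolding xs by auto
  with Cons.IH show ?case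
    using Cons.prems(2) unfolding xs reorder_Cons_split[OF xs(2)] by auto
qed

lemma
  assumes "mset xs = mset ys" "\<forall>x\<in>set xs. A x \<in> obj C"
  shows reorder_mor [simp]: "reorder C A xs ys \<in> mor C"
    and dm_reorder [simp]: "dm C (reorder C A xs ys) = tprod_list C A xs"
    and cd_reorder [simp]: "cd C (reorder C A xs ys) = tprod_list C A ys"
  using reorder_typing[OF assms] by auto

lemma reorder_self: "\<forall>x\<in>set xs. A x \<in> obj C \<Longrightarrow> reorder C A xs xs = idm C (tprod_list C A xs)"
  by (induction xs) (simp_all add: reorder_Cons_split[of _ "[]", simplified])

lemma reorder_swap_head_ordered:
  assumes xs: "xs = P @ a # Q @ b # R'" "a \<notin> set P" "b \<notin> set P" "b \<notin> set Q" "a \<noteq> b"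
    and rest: "mset (P @ Q @ R') = mset R" and obj: "\<forall>x\<in>set xs. A x \<in> obj C"
  shows "reorder C A xs (b # a # R) = (brd C (A a) (A b) \<otimes> idm C (tprod_list C A R)) \<cdot> reorder C A xs (a # b # R)"
proof -
  let ?p = "tprod_list C A P" and ?q = "tprod_list C A Q" and ?r = "tprod_list C A R'"
  let ?\<alpha> = "A a" and ?\<beta> = "A b" and ?\<rho> = "tprod_list C A R"
  let ?c = "reorder C A (P @ Q @ R') R"
  have "set R = set (P @ Q @ R')"
    using rest by (metis mset_eq_setD)
  then have objs: "?p \<in> obj C" "?q \<in> obj C" "?r \<in> obj C" "?\<alpha> \<in> obj C" "?\<beta> \<in> obj C" "?\<rho> \<in> obj C"
    using obj unfolding xs(1) by auto
  have c: "?c \<in> mor C" "dm C ?c = ?p \<boxtimes> ?q \<boxtimes> ?r" "cd C ?c = ?\<rho>"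
    using obj rest unfolding xs(1) by auto
  have "reorder C A xs (a # b # R) =
      (idm C ?\<alpha> \<otimes> reorder C A ((P @ Q) @ b # R') (b # R)) \<cdot> (brd C ?p ?\<alpha> \<otimes> idm C (tprod_list C A (Q @ b # R')))"
    using reorder_Cons_split[of a P C A "Q @ b # R'" "b # R"] xs by simp
  moreover have "reorder C A ((P @ Q) @ b # R') (b # R) =
      (idm C ?\<beta> \<otimes> ?c) \<cdot> (brd C (tprod_list C A (P @ Q)) ?\<beta> \<otimes> idm C ?r)"
    using reorder_Cons_split[of b "P @ Q" C A R' R] xs by simp
  ultimately have ab: "reorder C A xs (a # b # R) =
      (idm C ?\<alpha> \<otimes> ((idm C ?\<beta> \<otimes> ?c) \<cdot> (brd C (?p \<boxtimes> ?q) ?\<beta> \<otimes> idm C ?r))) \<cdot> (brd C ?p ?\<alpha> \<otimes> idm C (?q \<boxtimes> ?\<beta> \<boxtimes> ?r))"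
    using obj objs unfolding xs(1) by simp
  have "reorder C A xs (b # a # R) =
      (idm C ?\<beta> \<otimes> reorder C A (P @ a # Q @ R') (a # R)) \<cdot> (brd C (tprod_list C A (P @ a # Q)) ?\<beta> \<otimes> idm C ?r)"
    using reorder_Cons_split[of b "P @ a # Q" C A R' "a # R"] xs by simp
  moreover have "reorder C A (P @ a # Q @ R') (a # R) =
      (idm C ?\<alpha> \<otimes> ?c) \<cdot> (brd C ?p ?\<alpha> \<otimes> idm C (tprod_list C A (Q @ R')))"
    using reorder_Cons_split[of a P C A "Q @ R'" R] xs by simp
  ultimately have ba: "reorder C A xs (b # a # R) =
      (idm C ?\<beta> \<otimes> ((idm C ?\<alpha> \<otimes> ?c) \<cdot> (brd C ?p ?\<alpha> \<otimes> idm C (?q \<boxtimes> ?r)))) \<cdot> (brd C (?p \<boxtimes> ?\<alpha> \<boxtimes> ?q) ?\<beta> \<otimes> idm C ?r)"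
    using obj objs unfolding xs(1) by simp
  have interchange: "(idm C (?\<beta> \<boxtimes> ?\<alpha>) \<otimes> ?c) \<cdot> (brd C ?\<alpha> ?\<beta> \<otimes> idm C (?p \<boxtimes> ?q \<boxtimes> ?r))
      = (brd C ?\<alpha> ?\<beta> \<otimes> idm C ?\<rho>) \<cdot> (idm C (?\<alpha> \<boxtimes> ?\<beta>) \<otimes> ?c)"
    using cmp_tnsm_idm_commute[of "brd C ?\<alpha> ?\<beta>" ?c] objs c by simp
  have "reorder C A xs (b # a # R) =
      (idm C (?\<beta> \<boxtimes> ?\<alpha>) \<otimes> ?c) \<cdot> (((idm C ?\<beta> \<otimes> brd C ?p ?\<alpha> \<otimes> idm C ?q) \<cdot> brd C (?p \<boxtimes> ?\<alpha> \<boxtimes> ?q) ?\<beta>) \<otimes> idm C ?r)"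
    unfolding ba using objs c by (simp add: cmp_assoc flip: tnsm_cmp_idm_left tnsm_cmp_idm_right)
  also have "\<dots> = (idm C (?\<beta> \<boxtimes> ?\<alpha>) \<otimes> ?c) \<cdot> (((brd C ?\<alpha> ?\<beta> \<otimes> idm C (?p \<boxtimes> ?q)) \<cdot>
      (idm C ?\<alpha> \<otimes> brd C (?p \<boxtimes> ?q) ?\<beta>) \<cdot> (brd C ?p ?\<alpha> \<otimes> idm C (?q \<boxtimes> ?\<beta>))) \<otimes> idm C ?r)"
    using objs by (simp only: brd_move_past)
  also have "\<dots> = (brd C ?\<alpha> ?\<beta> \<otimes> idm C ?\<rho>) \<cdot> reorder C A xs (a # b # R)"
    unfolding ab using objs c by (simp add: cmp_assoc interchange flip: tnsm_cmp_idm_left tnsm_cmp_idm_right)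
  finally show ?thesis .
qed

lemma reorder_swap_head:
  assumes perm: "mset xs = mset (a # b # R)" and "a \<noteq> b" and obj: "\<forall>x\<in>set xs. A x \<in> obj C"
  shows "reorder C A xs (b # a # R) = (brd C (A a) (A b) \<otimes> idm C (tprod_list C A R)) \<cdot> reorder C A xs (a # b # R)"
proof -
  have ab: "a \<in> set xs" "b \<in> set xs" "set R \<subseteq> set xs"
    using perm by (metis list.set_intros mset_eq_setD subsetI)+
  then obtain P x zs where xs: "xs = P @ x # zs" "x \<in> {a, b}" "\<forall>y\<in>set P. y \<notin> {a, b}"
    using split_list_first_prop[of xs "\<lambda>y. y \<in> {a, b}"] by blast
  have objs: "A a \<in> obj C" "A b \<in> obj C" "tprod_list C A R \<in> obj C"
    using ab obj by (auto intro!: tprod_list_obj)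
  show ?thesis
  proof (cases "x = a")
    case True
    then obtain Q R' where "zs = Q @ b # R'" "b \<notin> set Q"
      using xs ab \<open>a \<noteq> b\<close> split_list_first[of b zs] by auto
    then show ?thesis
      using reorder_swap_head_ordered[of xs P a Q b R' R A] xs True perm obj \<open>a \<noteq> b\<close> by auto
  next
    case False
    \<comment> \<open>b comes first: apply the ordered case with a and b exchanged and cancel the two braidings\<close>
    then obtain Q R' where "zs = Q @ a # R'" "a \<notin> set Q"
      using xs ab \<open>a \<noteq> b\<close> split_list_first[of a zs] by auto
    then have swapped: "reorder C A xs (a # b # R) = (brd C (A b) (A a) \<otimes> idm C (tprod_list C A R)) \<cdot> reorder C A xs (b # a # R)"
      using reorder_swap_head_ordered[of xs P b Q a R' R A] xs False perm obj \<open>a \<noteq> b\<close> by auto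
    have "mset xs = mset (b # a # R)"
      using perm by simp
    then show ?thesis
      using objs obj unfolding swapped by (simp add: cmp_assoc tnsm_cmp_idm_right brd_brd)
  qed
qed

lemma reorder_swap:
  assumes "mset xs = mset (L @ a # b # R)" "a \<noteq> b" "\<forall>x\<in>set xs. A x \<in> obj C"
  shows "reorder C A xs (L @ b # a # R) =
    (idm C (tprod_list C A L) \<otimes> brd C (A a) (A b) \<otimes> idm C (tprod_list C A R)) \<cdot> reorder C A xs (L @ a # b # R)"
  using assms
proof (induction L arbitrary: xs)
  case Nil
  then show ?case
    using reorder_swap_head[of xs a b R A] by (simp add: mset_eq_setD[OF Nil.prems(1)])
next
  case (Cons m L)
  have "m \<in> set xs"
    using Cons.prems(1) by (metis list.set_intros(1) append_Cons mset_eq_setD)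
  then obtain pre post where xs: "xs = pre @ m # post" "m \<notin> set pre"
    using split_list_first by metis
  have rest: "mset (pre @ post) = mset (L @ a # b # R)" "\<forall>x\<in>set (pre @ post). A x \<in> obj C"
    using Cons.prems unfolding xs(1) by auto
  have objs: "\<forall>x\<in>set (L @ a # b # R). A x \<in> obj C" "A m \<in> obj C"
    using Cons.prems mset_eq_setD[OF Cons.prems(1)] by auto
  show ?case
    using Cons.IH[OF rest(1) Cons.prems(2) rest(2)] rest objs Cons.prems(3)
    unfolding xs(1) by (simp add: reorder_Cons_split[OF xs(2)] cmp_assoc flip: tnsm_cmp_idm_left)
qed

lemma coh_rel_eq_reorder:
  assumes "coh_rel C A K \<sigma> f" "\<forall>i\<in>{1..K}. A i \<in> obj C"
  shows "\<sigma> permutes {1..K} \<and> f = reorder C A [1..<Suc K] (map (inv \<sigma>) [1..<Suc K])"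
  using assms
proof (induction rule: coh_rel.induct)
  case base
  show ?case
    by (intro conjI permutes_id) (use base in \<open>simp add: reorder_self tprod_eq_tprod_list del: upt_Suc\<close>)
next
  case (step \<sigma> f j)
  then have \<sigma>: "\<sigma> permutes {1..K}" and f: "f = reorder C A [1..<Suc K] (map (inv \<sigma>) [1..<Suc K])"
    by auto
  define L where "L = map (inv \<sigma>) [1..<j]"
  define R where "R = map (inv \<sigma>) [Suc (Suc j)..<Suc K]"
  have before: "map (inv \<sigma>) [1..<Suc K] = L @ inv \<sigma> j # inv \<sigma> (Suc j) # R"
    and after: "map (inv (adj j \<circ> \<sigma>)) [1..<Suc K] = L @ inv \<sigma> (Suc j) # inv \<sigma> j # R"
    unfolding L_def R_def inv_adj_comp[OF \<sigma>] using map_upt_adj[OF step.hyps(2,3)] by (simp_all del: upt_Suc)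
  have inv\<sigma>: "inv \<sigma> permutes {1..K}"
    using permutes_inv[OF \<sigma>] .
  have "mset [1..<Suc K] = mset (map (inv \<sigma>) [1..<Suc K])"
    using mset_map_permutes_upt[OF inv\<sigma>] by simp
  moreover have "inv \<sigma> j \<noteq> inv \<sigma> (Suc j)"
    using permutes_inj[OF inv\<sigma>] by (metis injD n_not_Suc_n)
  ultimately have "reorder C A [1..<Suc K] (map (inv (adj j \<circ> \<sigma>)) [1..<Suc K]) =
      (idm C (tprod_list C A L) \<otimes> brd C (A (inv \<sigma> j)) (A (inv \<sigma> (Suc j))) \<otimes> idm C (tprod_list C A R)) \<cdot> f"
    unfolding after f before using step.prems permutes_inj[OF inv\<sigma>]
    by (intro reorder_swap) (auto simp: inj_def)
  moreover have "swapmap C (A \<circ> inv \<sigma>) K j =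
      idm C (tprod_list C A L) \<otimes> brd C (A (inv \<sigma> j)) (A (inv \<sigma> (Suc j))) \<otimes> idm C (tprod_list C A R)"
  proof -
    have "\<forall>i\<in>{1..K}. (A \<circ> inv \<sigma>) i \<in> obj C"
      using step.prems permutes_in_image[OF inv\<sigma>] by simp
    then show ?thesis
      using step.hyps(2,3)
      by (simp add: swapmap_def tprod_eq_tprod_list L_def R_def tprod_list_map del: upt_Suc)
  qed
  moreover have "adj j \<circ> \<sigma> permutes {1..K}"
    using permutes_compose[OF \<sigma> adj_permutes] step.hyps(2,3) .
  ultimately show ?case by metis
qed

lemma coh_iso_eq_reorder:
  assumes "\<sigma> permutes {1..K}" "\<forall>i\<in>{1..K}. A i \<in> obj C"
  shows "coh_iso C A K \<sigma> = reorder C A [1..<Suc K] (map (inv \<sigma>) [1..<Suc K])"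
  using someI_ex[OF coh_rel_exists[OF assms(1)]] coh_rel_eq_reorder assms(2)
  unfolding coh_iso_def by blast

lemma tprod_list_filter:
  "\<forall>x\<in>set xs. A x \<in> obj C \<Longrightarrow> \<forall>x\<in>set xs. \<not> P x \<longrightarrow> A x = unt C \<Longrightarrow>
    tprod_list C A (filter P xs) = tprod_list C A xs"
  by (induction xs) auto

lemma reorder_filter:
  assumes "mset xs = mset ys" "\<forall>x\<in>set xs. A x \<in> obj C" "\<forall>x\<in>set xs. \<not> P x \<longrightarrow> A x = unt C"
  shows "reorder C A (filter P xs) (filter P ys) = reorder C A xs ys"
  using assms
proof (induction ys arbitrary: xs)
  case Nil
  then show ?case by simp
next
  case (Cons y ys)
  have "y \<in> set xs"
    using Cons.prems(1) by (metis list.set_intros(1) mset_eq_setD)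
  then obtain pre post where xs: "xs = pre @ y # post" "y \<notin> set pre"
    using split_list_first by metis
  have rest: "mset (pre @ post) = mset ys"
    using Cons.prems(1) unfolding xs(1) by simp
  have IH: "reorder C A (filter P (pre @ post)) (filter P ys) = reorder C A (pre @ post) ys"
    using Cons.IH[OF rest] Cons.prems(2,3) unfolding xs(1) by simp
  show ?case
  proof (cases "P y")
    case True
    then show ?thesis
      using IH Cons.prems(2,3) xs
      by (simp add: reorder_Cons_split tprod_list_filter)
  next
    case False
    then show ?thesis
      using IH rest Cons.prems(2,3) xs
      by (simp add: reorder_Cons_split)
  qed
qed

end

section \<open>Structure isomorphisms\<close>

lemma push_eq_unt:
  assumes "inj_omega u" "i \<notin> u ` supp C X"
  shows "push C u X i = unt C"
proof (cases "i \<in> u ` {1..}")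
  case True
  then obtain j where j: "j \<in> {1..}" "i = u j" by blast
  then have "the_inv_into {1..} u i = j"
    using the_inv_into_f_f[of u "{1..}" j] assms(1) unfolding inj_omega_def by simp
  moreover have "j \<notin> supp C X"
    using assms(2) j by blast
  ultimately show ?thesis
    using j True by (simp add: push_def supp_def)
qed (simp add: push_def)

lemma struct_iso_witness_exists:
  assumes X: "Phi_obj C X" and u: "inj_omega u"
  shows "\<exists>K \<sigma>. (\<forall>i>K. X i = unt C \<and> push C u X i = unt C) \<and> \<sigma> permutes {1..K} \<and>
    (\<forall>i\<in>{1..K}. X i \<noteq> unt C \<longrightarrow> \<sigma> i = u i)"
proof -
  let ?S = "supp C X"
  have S: "finite ?S" "?S \<subseteq> {1..}"
    using X by (auto simp: Phi_obj_def supp_def)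
  define K where "K = Max (insert 0 (?S \<union> u ` ?S))"
  have bounds: "?S \<subseteq> {1..K}" "u ` ?S \<subseteq> {1..K}"
  proof -
    have "x \<le> K" if "x \<in> ?S \<union> u ` ?S" for x
      using Max_ge[of "insert 0 (?S \<union> u ` ?S)" x] S(1) that unfolding K_def by blast
    moreover have "u ` ?S \<subseteq> {1..}"
      using u S(2) unfolding inj_omega_def by blast
    ultimately show "?S \<subseteq> {1..K}" "u ` ?S \<subseteq> {1..K}"
      using S(2) by auto
  qed
  moreover have "inj_on u ?S"
    using u S(2) by (auto simp: inj_omega_def intro: inj_on_subset)
  ultimately obtain \<sigma> where \<sigma>: "\<sigma> permutes {1..K}" "\<forall>i\<in>?S. \<sigma> i = u i"
    using permutes_extension[of "{1..K}" ?S u] by blast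
  have "\<forall>i>K. X i = unt C \<and> push C u X i = unt C"
  proof (intro allI impI conjI)
    fix i assume "K < i"
    then have "i \<notin> ?S" "i \<notin> u ` ?S"
      using bounds by auto
    then show "X i = unt C" "push C u X i = unt C"
      using \<open>K < i\<close> push_eq_unt[OF u] by (auto simp: supp_def)
  qed
  moreover have "\<forall>i\<in>{1..K}. X i \<noteq> unt C \<longrightarrow> \<sigma> i = u i"
    using \<sigma>(2) by (simp add: supp_def)
  ultimately show ?thesis
    using \<sigma>(1) by blast
qed

context permutative_cat
begin

lemma coh_iso_eq_reorder_supp:
  assumes X: "Phi_obj C X" and u: "inj_on u (supp C X)"
    and ys: "set ys = supp C X" "sorted_wrt (\<lambda>a b. u a < u b) ys"
    and K: "\<forall>i>K. X i = unt C" and \<sigma>: "\<sigma> permutes {1..K}"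
    and agree: "\<forall>i\<in>{1..K}. X i \<noteq> unt C \<longrightarrow> \<sigma> i = u i"
  shows "coh_iso C X K \<sigma> = reorder C X (sorted_list_of_set (supp C X)) ys"
proof -
  let ?S = "supp C X" and ?ns = "[1..<Suc K]" and ?P = "\<lambda>i. X i \<noteq> unt C"
  have "finite ?S" and Xobj: "\<forall>i\<ge>1. X i \<in> obj C"
    using X by (auto simp: Phi_obj_def)
  have "?S \<subseteq> {1..K}"
    using K by (auto simp: supp_def not_less[symmetric])
  then have set_filter: "set (filter ?P ?ns) = ?S" "set (filter ?P (map (inv \<sigma>) ?ns)) = ?S"
    using permutes_image[OF permutes_inv[OF \<sigma>]]
    by (auto simp: supp_def atLeastLessThanSuc_atLeastAtMost simp del: upt_Suc)
  have filter_ns: "filter ?P ?ns = sorted_list_of_set ?S"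
    by (rule strict_sorted_equal)
      (use set_filter \<open>finite ?S\<close> in \<open>simp_all add: sorted_wrt_filter del: upt_Suc\<close>)
  have u_inv: "u (inv \<sigma> v) = v" if "v \<in> set (filter (?P \<circ> inv \<sigma>) ?ns)" for v
  proof -
    have "v \<in> {1..K}" "?P (inv \<sigma> v)"
      using that by auto
    moreover have "inv \<sigma> v \<in> {1..K}"
      using permutes_in_image[OF permutes_inv[OF \<sigma>]] \<open>v \<in> {1..K}\<close> by simp
    ultimately have "\<sigma> (inv \<sigma> v) = u (inv \<sigma> v)"
      using agree by blast
    then show ?thesis
      using permutes_inverses(1)[OF \<sigma>] by simp
  qed
  have "sorted_wrt (\<lambda>a b. u a < u b) (map (inv \<sigma>) (filter (?P \<circ> inv \<sigma>) ?ns))"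
    unfolding sorted_wrt_map
    by (rule sorted_wrt_mono_rel[OF _ sorted_wrt_filter[OF sorted_wrt_upt]]) (simp only: u_inv)
  then have filter_\<sigma>: "filter ?P (map (inv \<sigma>) ?ns) = ys"
    using u set_filter ys by (intro sorted_wrt_key_unique) (simp_all add: filter_map)
  have "coh_iso C X K \<sigma> = reorder C X ?ns (map (inv \<sigma>) ?ns)"
    using Xobj by (intro coh_iso_eq_reorder \<sigma>) auto
  also have "\<dots> = reorder C X (filter ?P ?ns) (filter ?P (map (inv \<sigma>) ?ns))"
    using Xobj mset_map_permutes_upt[OF permutes_inv[OF \<sigma>]] by (intro reorder_filter[symmetric]) auto
  finally show ?thesis
    unfolding filter_ns filter_\<sigma> .
qed

lemma struct_iso_eq_reorder:
  assumes X: "Phi_obj C X" and u: "inj_omega u"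
    and ys: "set ys = supp C X" "sorted_wrt (\<lambda>a b. u a < u b) ys"
  shows "struct_iso C u X = reorder C X (sorted_list_of_set (supp C X)) ys"
proof -
  have "inj_on u (supp C X)"
    using u by (auto simp: inj_omega_def supp_def intro: inj_on_subset)
  note witness_eq = coh_iso_eq_reorder_supp[OF X this ys]
  have "\<exists>f K \<sigma>. (\<forall>i>K. X i = unt C \<and> push C u X i = unt C) \<and> \<sigma> permutes {1..K} \<and>
      (\<forall>i\<in>{1..K}. X i \<noteq> unt C \<longrightarrow> \<sigma> i = u i) \<and> f = coh_iso C X K \<sigma>"
    using struct_iso_witness_exists[OF X u] by blast
  then show ?thesis
    unfolding struct_iso_def by (rule someI2_ex) (use witness_eq in blast)
qed

lemma struct_iso_eq_coh_iso:
  assumes X: "Phi_obj C X" and u: "inj_omega u"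
    and I: "map I [1..<Suc m] = sorted_list_of_set (supp C X)"
    and \<sigma>: "\<sigma> permutes {1..m}"
    and sorted: "sorted_wrt (\<lambda>a b. u a < u b) (map I (map (inv \<sigma>) [1..<Suc m]))"
  shows "struct_iso C u X = coh_iso C (X \<circ> I) m \<sigma>"
proof -
  let ?S = "supp C X" and ?ns = "[1..<Suc m]"
  have S: "finite ?S" "?S \<subseteq> {1..}" and Xobj: "\<forall>i\<ge>1. X i \<in> obj C"
    using X by (auto simp: Phi_obj_def supp_def)
  have I': "inj_on I {1..m}" "I ` {1..m} = ?S"
    using map_upt_sorted_list_of_setD[OF I S(1)] .
  have "set (map I (map (inv \<sigma>) ?ns)) = I ` inv \<sigma> ` {1..m}"
    by (simp only: set_map set_upt atLeastLessThanSuc_atLeastAtMost)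
  also have "\<dots> = ?S"
    using permutes_image[OF permutes_inv[OF \<sigma>]] I'(2) by simp
  finally have "struct_iso C u X = reorder C X (map I ?ns) (map I (map (inv \<sigma>) ?ns))"
    unfolding I by (rule struct_iso_eq_reorder[OF X u _ sorted])
  also have "\<dots> = reorder C (X \<circ> I) ?ns (map (inv \<sigma>) ?ns)"
    using mset_map_permutes_upt[OF permutes_inv[OF \<sigma>]] I'(1)
    by (intro reorder_map) (simp_all add: atLeastLessThanSuc_atLeastAtMost del: upt_Suc)
  also have "\<dots> = coh_iso C (X \<circ> I) m \<sigma>"
    using \<sigma> Xobj I'(2) S(2) by (intro coh_iso_eq_reorder[symmetric]) auto
  finally show ?thesis .
qed

end

theorem corollary2p14:
  fixes C :: "('o, 'm) pcat" and X :: "nat \<Rightarrow> 'o" and u :: "nat \<Rightarrow> nat"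
  assumes "permutative_category C"
    and "Phi_obj C X"
    and "inj_omega u"
  defines "m \<equiv> card (supp C X)"
    and "I \<equiv> (\<lambda>j. sorted_list_of_set (supp C X) ! (j - 1))"
  shows "(\<exists>!\<sigma>. \<sigma> permutes {1..m} \<and>
            (\<forall>a b. 1 \<le> a \<longrightarrow> a < b \<longrightarrow> b \<le> m \<longrightarrow> u (I (inv \<sigma> a)) < u (I (inv \<sigma> b)))) \<and>
          (\<forall>\<sigma>. \<sigma> permutes {1..m} \<and>
            (\<forall>a b. 1 \<le> a \<longrightarrow> a < b \<longrightarrow> b \<le> m \<longrightarrow> u (I (inv \<sigma> a)) < u (I (inv \<sigma> b)))
          \<longrightarrow> struct_iso C u X = coh_iso C (X \<circ> I) m \<sigma>)"
proof -
  interpret permutative_cat C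
    using assms(1) by (rule permutative_category_imp_permutative_cat)
  let ?S = "supp C X" and ?ns = "[1..<Suc m]"
  have S: "finite ?S" "?S \<subseteq> {1..}"
    using assms(2) by (auto simp: Phi_obj_def supp_def)
  have map_I: "map I ?ns = sorted_list_of_set ?S"
    by (rule nth_equalityI) (simp_all add: I_def m_def S(1) del: upt_Suc)
  have "inj_on u ?S"
    using assms(3) S(2) by (auto simp: inj_omega_def intro: inj_on_subset)
  then have "inj_on (u \<circ> I) {1..m}"
    using map_upt_sorted_list_of_setD[OF map_I S(1)] by (simp add: comp_inj_on)
  then have "\<exists>!\<sigma>. \<sigma> permutes {1..m} \<and> sorted_wrt (\<lambda>a b. u a < u b) (map I (map (inv \<sigma>) ?ns))"
    using ex1_sorting_permutation[of "u \<circ> I" m] by (simp add: sorted_wrt_map del: upt_Suc)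
  moreover have "(\<forall>a b. 1 \<le> a \<longrightarrow> a < b \<longrightarrow> b \<le> m \<longrightarrow> u (I (inv \<sigma> a)) < u (I (inv \<sigma> b))) \<longleftrightarrow>
      sorted_wrt (\<lambda>a b. u a < u b) (map I (map (inv \<sigma>) ?ns))" for \<sigma>
    unfolding map_map sorted_wrt_map_upt_iff by simp
  ultimately show ?thesis
    using struct_iso_eq_coh_iso[OF assms(2,3) map_I] by simp
qed

end
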